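(* Let $n\ge 3$ and $2\le i\le n-1$, and let $\beta\in B_n(D)$ be such that $\pi(\beta)$ is a cycle of length $i+1$. Then the subgroup $H_\beta=\langle P_n(D),\beta\rangle$ of $B_n(D)$ is not bi-orderable.
   Context: $B_n(D)$ is the Artin braid group on $n$ strands, with generators $\sigma_1,\dots,\sigma_{n-1}$ and relations $\sigma_i\sigma_j=\sigma_j\sigma_i$ for $|i-j|\ge 2$ and $\sigma_i\sigma_{i+1}\sigma_i=\sigma_{i+1}\sigma_i\sigma_{i+1}$. The permutation homomorphism $\pi: B_n(D)\to S_n$ is given by $\pi(\sigma_i)=(i,i+1)$, and $P_n(D)=\ker\pi$. $H_\beta=\langle P_n(D),\beta\rangle$ is the subgroup generated by $P_n(D)$ and $\beta$. A group is bi-orderable if it admits a strict total ordering invariant under both left and right multiplication. *)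

theory Defs
  imports "HOL-Algebra.Algebra" "HOL-Combinatorics.Cycles" "HOL-Combinatorics.Transposition"
begin

text \<open>Braid group B_n(D) via its standard (Artin) presentation. A word is a list of
letters (i, True) = sigma_i and (i, False) = sigma_i inverse, with 1 \<le> i \<le> n-1.\<close>

type_synonym bword = "(nat \<times> bool) list"

definition bwords :: "nat \<Rightarrow> bword set" where
  "bwords n = {w. \<forall>(i, b) \<in> set w. 1 \<le> i \<and> i < n}"

definition braid_rels :: "nat \<Rightarrow> (bword \<times> bword) set" where
  "braid_rels n =
     {([(i, b), (i, \<not> b)], []) | i b. 1 \<le> i \<and> i < n}
   \<union> {([(i, True), (j, True)], [(j, True), (i, True)]) | i j.
        1 \<le> i \<and> i < n \<and> 1 \<le> j \<and> j < n \<and> (i + 2 \<le> j \<or> j + 2 \<le> i)}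
   \<union> {([(i, True), (Suc i, True), (i, True)], [(Suc i, True), (i, True), (Suc i, True)]) | i.
        1 \<le> i \<and> Suc i < n}"

inductive braid_eq :: "nat \<Rightarrow> bword \<Rightarrow> bword \<Rightarrow> bool" for n where
  refl: "braid_eq n w w"
| sym: "braid_eq n u v \<Longrightarrow> braid_eq n v u"
| trans: "braid_eq n u v \<Longrightarrow> braid_eq n v w \<Longrightarrow> braid_eq n u w"
| rel: "(l, r) \<in> braid_rels n \<Longrightarrow> braid_eq n (u @ l @ v) (u @ r @ v)"

definition braid_class :: "nat \<Rightarrow> bword \<Rightarrow> bword set" where
  "braid_class n w = {v \<in> bwords n. braid_eq n w v}"

definition braid_group :: "nat \<Rightarrow> bword set monoid" where
  "braid_group n =
     \<lparr> carrier = braid_class n ` bwords n,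
       monoid.mult = (\<lambda>A B. braid_class n ((SOME a. a \<in> A) @ (SOME b. b \<in> B))),
       one = braid_class n [] \<rparr>"

text \<open>Permutation homomorphism pi : B_n \<rightarrow> S_n, pi(sigma_i) = (i, i+1),
  permutations of {1..n} viewed as maps nat \<Rightarrow> nat fixing everything else.\<close>
definition perm_of_bword :: "bword \<Rightarrow> nat \<Rightarrow> nat" where
  "perm_of_bword w = foldr (\<lambda>(i, b) f. transpose i (Suc i) \<circ> f) w id"

definition braid_perm :: "bword set \<Rightarrow> nat \<Rightarrow> nat" where
  "braid_perm A = perm_of_bword (SOME w. w \<in> A)"

definition pure_braids :: "nat \<Rightarrow> bword set set" where
  "pure_braids n = {A \<in> carrier (braid_group n). braid_perm A = id}"

definition H_beta :: "nat \<Rightarrow> bword set \<Rightarrow> bword set set" where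
  "H_beta n \<beta> = generate (braid_group n) (insert \<beta> (pure_braids n))"

definition bi_orderable :: "('a, 'b) monoid_scheme \<Rightarrow> bool" where
  "bi_orderable G \<longleftrightarrow> (\<exists>less :: 'a \<Rightarrow> 'a \<Rightarrow> bool.
     (\<forall>x \<in> carrier G. \<not> less x x) \<and>
     (\<forall>x \<in> carrier G. \<forall>y \<in> carrier G. \<forall>z \<in> carrier G. less x y \<longrightarrow> less y z \<longrightarrow> less x z) \<and>
     (\<forall>x \<in> carrier G. \<forall>y \<in> carrier G. x \<noteq> y \<longrightarrow> less x y \<or> less y x) \<and>
     (\<forall>x \<in> carrier G. \<forall>y \<in> carrier G. \<forall>z \<in> carrier G. less x y \<longrightarrow>
        less (z \<otimes>\<^bsub>G\<^esub> x) (z \<otimes>\<^bsub>G\<^esub> y) \<and> less (x \<otimes>\<^bsub>G\<^esub> z) (y \<otimes>\<^bsub>G\<^esub> z)))"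

end

theory Submission
  imports Defs
begin

(* Let \<delta> = \<sigma>_1 ... \<sigma>_i. It permutes the strands by the cycle (1 2 ... i+1), and \<delta>^(i+1),
   the full twist of the first i+1 strands, is central in B_(i+1): \<delta> conjugates \<sigma>_j to \<sigma>_(j+1)
   for j < i, and \<delta>^2 conjugates \<sigma>_i to \<sigma>_1. Choose a braid w whose permutation carries
   1, ..., i+1 onto the cycle of \<pi>(\<beta>), and \<rho> \<in> B_(i+1) whose permutation reverses 1, ..., i+1.
   Then x = w \<delta> w\<inverse> and y = (w \<rho>) \<delta> (w \<rho>)\<inverse> satisfy \<pi>(x) = \<pi>(\<beta>) and \<pi>(y) = \<pi>(\<beta>)\<inverse>,
   so x \<beta>\<inverse> and y \<beta> are pure and x, y \<in> H_\<beta>. Centrality of the full twist gives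
   x^(i+1) = y^(i+1), whereas x \<noteq> y because a cycle of length at least 3 is not an involution.
   But in a bi-ordered group x < y implies x^k < y^k, so roots are unique. *)

lemma braid_eq_context: "braid_eq n u v \<Longrightarrow> braid_eq n (p @ u @ q) (p @ v @ q)"
proof (induction rule: braid_eq.induct)
  case (refl w) show ?case by (rule braid_eq.refl)
next
  case (sym u v) show ?case using sym.IH by (rule braid_eq.sym)
next
  case (trans u v w) then show ?case by (metis braid_eq.trans)
next
  case (rel l r u v) then show ?case
    using braid_eq.rel[OF rel, where u = "p @ u" and v = "v @ q"] by simp
qed

lemma braid_eq_contextI:
  "braid_eq n u v \<Longrightarrow> L = p @ u @ q \<Longrightarrow> R = p @ v @ q \<Longrightarrow> braid_eq n L R"
  using braid_eq_context by blast

lemmas [trans] = braid_eq.trans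

lemma braid_eq_far_commute:
  "1 \<le> i \<Longrightarrow> i < n \<Longrightarrow> 1 \<le> j \<Longrightarrow> j < n \<Longrightarrow> i + 2 \<le> j \<or> j + 2 \<le> i
  \<Longrightarrow> braid_eq n [(i, True), (j, True)] [(j, True), (i, True)]"
  using braid_eq.rel[of "[(i, True), (j, True)]" "[(j, True), (i, True)]" n "[]" "[]"]
  unfolding braid_rels_def by auto

lemma braid_eq_braid:
  "1 \<le> i \<Longrightarrow> Suc i < n
  \<Longrightarrow> braid_eq n [(i, True), (Suc i, True), (i, True)] [(Suc i, True), (i, True), (Suc i, True)]"
  using braid_eq.rel[of "[(i, True), (Suc i, True), (i, True)]"
      "[(Suc i, True), (i, True), (Suc i, True)]"
      n "[]" "[]"]
  unfolding braid_rels_def by auto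

lemma braid_eq_cancel: "1 \<le> i \<Longrightarrow> i < n \<Longrightarrow> braid_eq n [(i, b), (i, \<not> b)] []"
  using braid_eq.rel[of "[(i, b), (i, \<not> b)]" "[]" n "[]" "[]"]
  unfolding braid_rels_def by auto

lemma bwords_simps [simp]:
  "[] \<in> bwords n"
  "a # w \<in> bwords n \<longleftrightarrow> 1 \<le> fst a \<and> fst a < n \<and> w \<in> bwords n"
  "u @ v \<in> bwords n \<longleftrightarrow> u \<in> bwords n \<and> v \<in> bwords n"
  by (auto simp: bwords_def split: prod.splits)

lemma bwords_mono: "w \<in> bwords m \<Longrightarrow> m \<le> n \<Longrightarrow> w \<in> bwords n"
  by (auto simp: bwords_def)

definition inv_bword :: "bword \<Rightarrow> bword" where
  "inv_bword w = rev (map (\<lambda>(i, b). (i, \<not> b)) w)"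

lemma inv_bword_simps [simp]:
  "inv_bword [] = []"
  "inv_bword (a # w) = inv_bword w @ [(fst a, \<not> snd a)]"
  "inv_bword (u @ v) = inv_bword v @ inv_bword u"
  by (auto simp: inv_bword_def split: prod.splits)

lemma inv_bword_inv_bword [simp]: "inv_bword (inv_bword w) = w"
  by (induction w) auto

lemma inv_bword_bwords [simp]: "inv_bword w \<in> bwords n \<longleftrightarrow> w \<in> bwords n"
  by (induction w) auto

lemma braid_eq_append_inv_bword: "w \<in> bwords n \<Longrightarrow> braid_eq n (w @ inv_bword w) []"
proof (induction w)
  case Nil then show ?case by (simp add: braid_eq.refl)
next
  case (Cons a w)
  obtain i b where a: "a = (i, b)" by (cases a)
  have "braid_eq n ((a # w) @ inv_bword (a # w)) ([a] @ [] @ [(i, \<not> b)])"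
    by (rule braid_eq_contextI[OF Cons.IH, where p = "[a]" and q = "[(i, \<not> b)]"])
      (use Cons.prems a in simp_all)
  also have "braid_eq n ([a] @ [] @ [(i, \<not> b)]) []"
    using braid_eq_cancel[of i n b] Cons.prems a by simp
  finally show ?case .
qed

lemma braid_eq_inv_bword_append: "w \<in> bwords n \<Longrightarrow> braid_eq n (inv_bword w @ w) []"
  using braid_eq_append_inv_bword[of "inv_bword w" n] by simp

definition word_pow :: "bword \<Rightarrow> nat \<Rightarrow> bword" where
  "word_pow w k = concat (replicate k w)"

lemma word_pow_simps [simp]:
  "word_pow w 0 = []"
  "word_pow w (Suc k) = w @ word_pow w k"
  by (simp_all add: word_pow_def)

lemma word_pow_add: "word_pow w (k + l) = word_pow w k @ word_pow w l"
  by (simp add: word_pow_def replicate_add)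

lemma word_pow_bwords: "w \<in> bwords n \<Longrightarrow> word_pow w k \<in> bwords n"
  by (induction k) auto

lemma braid_eq_word_pow_conj:
  "w \<in> bwords n
  \<Longrightarrow> braid_eq n (word_pow (w @ u @ inv_bword w) k) (w @ word_pow u k @ inv_bword w)"
proof (induction k)
  case 0 then show ?case using braid_eq_append_inv_bword[OF 0] by (simp add: braid_eq.sym)
next
  case (Suc k)
  have "braid_eq n (word_pow (w @ u @ inv_bword w) (Suc k))
      ((w @ u @ inv_bword w) @ (w @ word_pow u k @ inv_bword w) @ [])"
    by (rule braid_eq_contextI[OF Suc.IH[OF Suc.prems], where p = "w @ u @ inv_bword w"
        and q = "[]"])
      simp_all
  also have "braid_eq n \<dots> ((w @ u) @ [] @ (word_pow u k @ inv_bword w))"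
    by (rule braid_eq_contextI[OF braid_eq_inv_bword_append[OF Suc.prems], where p = "w @ u"
          and q = "word_pow u k @ inv_bword w"]) simp_all
  finally show ?case by simp
qed

subsection \<open>The full twist\<close>

definition sigma_prod :: "nat \<Rightarrow> nat \<Rightarrow> bword" where
  "sigma_prod a k = map (\<lambda>j. (j, True)) [a..<a + k]"

lemma sigma_prod_0 [simp]: "sigma_prod a 0 = []"
  by (simp add: sigma_prod_def)

lemma sigma_prod_Suc: "sigma_prod a (Suc k) = (a, True) # sigma_prod (Suc a) k"
  by (simp add: sigma_prod_def upt_conv_Cons)

lemma sigma_prod_snoc: "sigma_prod a (Suc k) = sigma_prod a k @ [(a + k, True)]"
  by (simp add: sigma_prod_def)

lemma sigma_prod_bwords: "1 \<le> a \<Longrightarrow> a + k \<le> n \<Longrightarrow> sigma_prod a k \<in> bwords n"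
  by (auto simp: sigma_prod_def bwords_def)

lemma braid_eq_letter_sigma_prod_commute:
  "1 \<le> i \<Longrightarrow> i < n \<Longrightarrow> 1 \<le> b \<Longrightarrow> b + k \<le> n \<Longrightarrow> i + 2 \<le> b \<or> b + k + 1 \<le> i
  \<Longrightarrow> braid_eq n ((i, True) # sigma_prod b k) (sigma_prod b k @ [(i, True)])"
proof (induction k arbitrary: b)
  case 0 then show ?case by (simp add: braid_eq.refl)
next
  case (Suc k)
  have "braid_eq n ((i, True) # sigma_prod b (Suc k))
      ([] @ [(b, True), (i, True)] @ sigma_prod (Suc b) k)"
    by (rule braid_eq_contextI[OF braid_eq_far_commute[of i n b], where p = "[]"
        and q = "sigma_prod (Suc b) k"])
      (use Suc.prems in \<open>auto simp: sigma_prod_Suc\<close>)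
  also have "braid_eq n \<dots> ([(b, True)] @ (sigma_prod (Suc b) k @ [(i, True)]) @ [])"
    by (rule braid_eq_contextI[OF Suc.IH[of "Suc b"], where p = "[(b, True)]" and q = "[]"])
      (use Suc.prems in auto)
  finally show ?case by (simp add: sigma_prod_Suc)
qed

lemma braid_eq_sigma_prod_letter_shift:
  "1 \<le> a \<Longrightarrow> a + k \<le> n \<Longrightarrow> a \<le> j \<Longrightarrow> j + 1 < a + k
  \<Longrightarrow> braid_eq n (sigma_prod a k @ [(j, True)]) ((Suc j, True) # sigma_prod a k)"
proof (induction k arbitrary: a)
  case 0 then show ?case by simp
next
  case (Suc k)
  show ?case
  proof (cases "a < j")
    case True
    have "braid_eq n (sigma_prod a (Suc k) @ [(j, True)])
        ([(a, True)] @ ((Suc j, True) # sigma_prod (Suc a) k) @ [])"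
      by (rule braid_eq_contextI[OF Suc.IH[of "Suc a"], where p = "[(a, True)]" and q = "[]"])
        (use Suc.prems True in \<open>auto simp: sigma_prod_Suc\<close>)
    also have "braid_eq n \<dots> ([] @ [(Suc j, True), (a, True)] @ sigma_prod (Suc a) k)"
      by (rule braid_eq_contextI[OF braid_eq_far_commute[of a n "Suc j"], where p = "[]"
          and q = "sigma_prod (Suc a) k"]) (use Suc.prems True in auto)
    finally show ?thesis by (simp add: sigma_prod_Suc)
  next
    case False
    then have j: "j = a" using Suc.prems by auto
    obtain k' where k: "k = Suc k'" using Suc.prems j by (cases k) auto
    note comm = braid_eq_letter_sigma_prod_commute[of a n "Suc (Suc a)" k']
    have "braid_eq n (sigma_prod a (Suc k) @ [(j, True)])
        ([(a, True), (Suc a, True)] @ ((a, True) # sigma_prod (Suc (Suc a)) k') @ [])"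
      by (rule braid_eq_contextI[OF braid_eq.sym[OF comm], where p = "[(a, True), (Suc a, True)]"
            and q = "[]"])
        (use Suc.prems j k in \<open>auto simp: sigma_prod_Suc\<close>)
    also have "braid_eq n \<dots>
        ([] @ [(Suc a, True), (a, True), (Suc a, True)] @ sigma_prod (Suc (Suc a)) k')"
      by (rule braid_eq_contextI[OF braid_eq_braid[of a n], where p = "[]"
          and q = "sigma_prod (Suc (Suc a)) k'"])
        (use Suc.prems j k in auto)
    finally show ?thesis using j k by (simp add: sigma_prod_Suc)
  qed
qed

lemma braid_eq_sigma_prod_shift:
  "1 \<le> a \<Longrightarrow> a + k \<le> n \<Longrightarrow> a \<le> b \<Longrightarrow> b + l < a + k
  \<Longrightarrow> braid_eq n (sigma_prod a k @ sigma_prod b l) (sigma_prod (Suc b) l @ sigma_prod a k)"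
proof (induction l arbitrary: b)
  case 0 then show ?case by (simp add: braid_eq.refl)
next
  case (Suc l)
  have "braid_eq n (sigma_prod a k @ sigma_prod b (Suc l))
      ([] @ ((Suc b, True) # sigma_prod a k) @ sigma_prod (Suc b) l)"
    by (rule braid_eq_contextI[OF braid_eq_sigma_prod_letter_shift[of a k n b], where p = "[]"
          and q = "sigma_prod (Suc b) l"])
      (use Suc.prems in \<open>auto simp: sigma_prod_Suc\<close>)
  also have "braid_eq n \<dots> ([(Suc b, True)] @ (sigma_prod (Suc (Suc b)) l @ sigma_prod a k) @ [])"
    by (rule braid_eq_contextI[OF Suc.IH[of "Suc b"], where p = "[(Suc b, True)]" and q = "[]"])
      (use Suc.prems in auto)
  finally show ?case by (simp add: sigma_prod_Suc)
qed

lemma braid_eq_sigma_prod_pair_letter: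
  "1 \<le> a \<Longrightarrow> a + k + 1 \<le> n
  \<Longrightarrow> braid_eq n (sigma_prod (Suc a) k @ sigma_prod a k @ [(a + k, True)])
                 ((a, True) # sigma_prod (Suc a) k @ sigma_prod a k)"
proof (induction k arbitrary: a)
  case 0 then show ?case by (simp add: braid_eq.refl)
next
  case (Suc k)
  let ?T = "sigma_prod (Suc (Suc a)) k"
  have comm: "braid_eq n ((a, True) # ?T) (?T @ [(a, True)])"
    by (rule braid_eq_letter_sigma_prod_commute) (use Suc.prems in auto)
  have "braid_eq n (sigma_prod (Suc a) (Suc k) @ sigma_prod a (Suc k) @ [(a + Suc k, True)])
      ([(Suc a, True)] @ ((a, True) # ?T) @ (sigma_prod (Suc a) k @ [(a + Suc k, True)]))"
    by (rule braid_eq_contextI[OF braid_eq.sym[OF comm], where p = "[(Suc a, True)]"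
          and q = "sigma_prod (Suc a) k @ [(a + Suc k, True)]"]) (simp_all add: sigma_prod_Suc)
  also have "braid_eq n \<dots>
      ([(Suc a, True), (a, True)] @ ((Suc a, True) # ?T @ sigma_prod (Suc a) k) @ [])"
    by (rule braid_eq_contextI[OF Suc.IH[of "Suc a"], where p = "[(Suc a, True), (a, True)]"
        and q = "[]"])
      (use Suc.prems in auto)
  also have "braid_eq n \<dots>
      ([] @ [(a, True), (Suc a, True), (a, True)] @ (?T @ sigma_prod (Suc a) k))"
    by (rule braid_eq_contextI[OF braid_eq.sym[OF braid_eq_braid[of a n]], where p = "[]"
          and q = "?T @ sigma_prod (Suc a) k"]) (use Suc.prems in auto)
  also have "braid_eq n \<dots> ([(a, True), (Suc a, True)] @ (?T @ [(a, True)]) @ sigma_prod (Suc a) k)"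
    by (rule braid_eq_contextI[OF comm, where p = "[(a, True), (Suc a, True)]"
        and q = "sigma_prod (Suc a) k"])
      simp_all
  finally show ?case by (simp add: sigma_prod_Suc)
qed

lemma braid_eq_sigma_prod_square_letter:
  assumes "1 \<le> M" "M < n"
  shows "braid_eq n (sigma_prod 1 M @ sigma_prod 1 M @ [(M, True)])
                    ((1, True) # sigma_prod 1 M @ sigma_prod 1 M)"
proof -
  obtain K where M: "M = Suc K" using assms by (cases M) auto
  have snoc: "sigma_prod 1 M = sigma_prod 1 K @ [(M, True)]"
    using sigma_prod_snoc[of 1 K] M by simp
  have shift: "braid_eq n (sigma_prod 1 M @ sigma_prod 1 K) (sigma_prod 2 K @ sigma_prod 1 M)"
    using braid_eq_sigma_prod_shift[of 1 M n 1 K] assms M by (simp add: numeral_2_eq_2)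
  have pair: "braid_eq n (sigma_prod 2 K @ sigma_prod 1 K @ [(M, True)])
      ((1, True) # sigma_prod 2 K @ sigma_prod 1 K)"
    using braid_eq_sigma_prod_pair_letter[of 1 K n] assms M by (simp add: numeral_2_eq_2)
  have "braid_eq n (sigma_prod 1 M @ sigma_prod 1 M @ [(M, True)])
      ([] @ (sigma_prod 2 K @ sigma_prod 1 M) @ [(M, True), (M, True)])"
    by (rule braid_eq_contextI[OF shift, where p = "[]" and q = "[(M, True), (M, True)]"])
        (use snoc in simp_all)
  also have "braid_eq n \<dots>
      ([] @ ((1, True) # sigma_prod 2 K @ sigma_prod 1 K) @ [(M, True), (M, True)])"
    by (rule braid_eq_contextI[OF pair, where p = "[]" and q = "[(M, True), (M, True)]"])
        (use snoc in simp_all)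
  also have "braid_eq n \<dots> ([(1, True)] @ (sigma_prod 1 M @ sigma_prod 1 K) @ [(M, True)])"
    by (rule braid_eq_contextI[OF braid_eq.sym[OF shift], where p = "[(1, True)]"
        and q = "[(M, True)]"])
      (use snoc in simp_all)
  finally show ?thesis using snoc by simp
qed

lemma braid_eq_sigma_prod_pow_letter:
  "M < n \<Longrightarrow> 1 \<le> j \<Longrightarrow> j + k \<le> M
  \<Longrightarrow> braid_eq n (word_pow (sigma_prod 1 M) k @ [(j, True)])
                 ((j + k, True) # word_pow (sigma_prod 1 M) k)"
proof (induction k)
  case 0 then show ?case by (simp add: braid_eq.refl)
next
  case (Suc k)
  have "braid_eq n (word_pow (sigma_prod 1 M) (Suc k) @ [(j, True)])
      (sigma_prod 1 M @ ((j + k, True) # word_pow (sigma_prod 1 M) k) @ [])"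
    by (rule braid_eq_contextI[OF Suc.IH, where p = "sigma_prod 1 M" and q = "[]"])
        (use Suc.prems in simp_all)
  also have "braid_eq n \<dots>
      ([] @ ((Suc (j + k), True) # sigma_prod 1 M) @ word_pow (sigma_prod 1 M) k)"
    by (rule braid_eq_contextI[OF braid_eq_sigma_prod_letter_shift[of 1 M n "j + k"], where p = "[]"
          and q = "word_pow (sigma_prod 1 M) k"])
      (use Suc.prems in auto)
  finally show ?case by simp
qed

definition full_twist :: "nat \<Rightarrow> bword" where
  "full_twist M = word_pow (sigma_prod 1 M) (Suc M)"

lemma braid_eq_full_twist_letter_pos:
  assumes "M < n" "1 \<le> j" "j \<le> M"
  shows "braid_eq n (full_twist M @ [(j, True)]) ((j, True) # full_twist M)"
proof -
  let ?\<delta> = "sigma_prod 1 M"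
  have split: "full_twist M = word_pow ?\<delta> (j - 1) @ (?\<delta> @ ?\<delta>) @ word_pow ?\<delta> (M - j)"
  proof -
    have "Suc M = (j - 1) + (2 + (M - j))" using assms by simp
    then show ?thesis
      unfolding full_twist_def by (simp only: word_pow_add) (simp add: numeral_2_eq_2)
  qed
  have "braid_eq n (full_twist M @ [(j, True)])
      ((word_pow ?\<delta> (j - 1) @ ?\<delta> @ ?\<delta>) @ ((M, True) # word_pow ?\<delta> (M - j)) @ [])"
    by (rule braid_eq_contextI[OF braid_eq_sigma_prod_pow_letter[of M n j "M - j"],
          where p = "word_pow ?\<delta> (j - 1) @ ?\<delta> @ ?\<delta>" and q = "[]"])
      (use assms split in simp_all)
  also have "braid_eq n \<dots> (word_pow ?\<delta> (j - 1) @ ((1, True) # ?\<delta> @ ?\<delta>) @ word_pow ?\<delta> (M - j))"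
    by (rule braid_eq_contextI[OF braid_eq_sigma_prod_square_letter[of M n],
        where p = "word_pow ?\<delta> (j - 1)"
          and q = "word_pow ?\<delta> (M - j)"]) (use assms in simp_all)
  also have "braid_eq n \<dots>
      ([] @ ((j, True) # word_pow ?\<delta> (j - 1)) @ (?\<delta> @ ?\<delta> @ word_pow ?\<delta> (M - j)))"
    by (rule braid_eq_contextI[OF braid_eq_sigma_prod_pow_letter[of M n 1 "j - 1"], where p = "[]"
          and q = "?\<delta> @ ?\<delta> @ word_pow ?\<delta> (M - j)"])
      (use assms in simp_all)
  finally show ?thesis using split by simp
qed

lemma braid_eq_full_twist_letter:
  assumes "M < n" "1 \<le> j" "j \<le> M"
  shows "braid_eq n ((j, b) # full_twist M) (full_twist M @ [(j, b)])"
proof (cases b)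
  case True
  then show ?thesis using braid_eq_full_twist_letter_pos[OF assms] by (simp add: braid_eq.sym)
next
  case False
  let ?D = "full_twist M"
  have "braid_eq n (?D @ [(j, False)]) ([] @ [(j, False), (j, True)] @ (?D @ [(j, False)]))"
    by (rule braid_eq_contextI[OF braid_eq.sym[OF braid_eq_cancel[of j n False]], where p = "[]"
          and q = "?D @ [(j, False)]"]) (use assms in simp_all)
  also have "braid_eq n \<dots> ([(j, False)] @ (?D @ [(j, True)]) @ [(j, False)])"
    by (rule braid_eq_contextI[OF braid_eq.sym[OF braid_eq_full_twist_letter_pos[OF assms]],
          where p = "[(j, False)]" and q = "[(j, False)]"]) simp_all
  also have "braid_eq n \<dots> (((j, False) # ?D) @ [] @ [])"
    by (rule braid_eq_contextI[OF braid_eq_cancel[of j n True], where p = "(j, False) # ?D"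
        and q = "[]"])
      (use assms in simp_all)
  finally show ?thesis using False by (simp add: braid_eq.sym)
qed

lemma braid_eq_full_twist_commute:
  "M < n \<Longrightarrow> \<rho> \<in> bwords (Suc M) \<Longrightarrow> braid_eq n (\<rho> @ full_twist M) (full_twist M @ \<rho>)"
proof (induction \<rho>)
  case Nil then show ?case by (simp add: braid_eq.refl)
next
  case (Cons a \<rho>)
  obtain j b where a: "a = (j, b)" by (cases a)
  have "braid_eq n ((a # \<rho>) @ full_twist M) ([a] @ (full_twist M @ \<rho>) @ [])"
    by (rule braid_eq_contextI[OF Cons.IH, where p = "[a]" and q = "[]"])
        (use Cons.prems in simp_all)
  also have "braid_eq n \<dots> ([] @ (full_twist M @ [a]) @ \<rho>)"
    by (rule braid_eq_contextI[OF braid_eq_full_twist_letter[of M n j b], where p = "[]"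
        and q = "\<rho>"])
      (use Cons.prems a in auto)
  finally show ?case by simp
qed

lemma braid_eq_pow_conj_sigma_prod:
  assumes "M < n" "w \<in> bwords n" "\<rho> \<in> bwords (Suc M)"
  shows "braid_eq n (word_pow ((w @ \<rho>) @ sigma_prod 1 M @ inv_bword (w @ \<rho>)) (Suc M))
                    (word_pow (w @ sigma_prod 1 M @ inv_bword w) (Suc M))"
proof -
  have \<rho>: "\<rho> \<in> bwords n" using bwords_mono[OF assms(3)] assms(1) by simp
  have "braid_eq n (word_pow ((w @ \<rho>) @ sigma_prod 1 M @ inv_bword (w @ \<rho>)) (Suc M))
      ((w @ \<rho>) @ full_twist M @ inv_bword (w @ \<rho>))"
    unfolding full_twist_def by (rule braid_eq_word_pow_conj) (use assms \<rho> in simp)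
  also have "braid_eq n \<dots> (w @ (full_twist M @ \<rho>) @ (inv_bword \<rho> @ inv_bword w))"
    by (rule braid_eq_contextI[OF braid_eq_full_twist_commute[OF assms(1,3)], where p = w
          and q = "inv_bword \<rho> @ inv_bword w"]) simp_all
  also have "braid_eq n \<dots> (w @ full_twist M @ inv_bword w)"
    by (rule braid_eq_contextI[OF braid_eq_append_inv_bword[OF \<rho>], where p = "w @ full_twist M"
          and q = "inv_bword w"]) simp_all
  also have "braid_eq n \<dots> (word_pow (w @ sigma_prod 1 M @ inv_bword w) (Suc M))"
    unfolding full_twist_def by (rule braid_eq.sym[OF braid_eq_word_pow_conj[OF assms(2)]])
  finally show ?thesis .
qed

subsection \<open>The braid group and the permutation homomorphism\<close>

lemma braid_class_self: "w \<in> bwords n \<Longrightarrow> w \<in> braid_class n w"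
  by (simp add: braid_class_def braid_eq.refl)

lemma braid_class_eqI: "braid_eq n u v \<Longrightarrow> braid_class n u = braid_class n v"
  unfolding braid_class_def by (auto intro: braid_eq.trans braid_eq.sym)

lemma braid_eq_some_braid_class:
  "w \<in> bwords n \<Longrightarrow> braid_eq n w (SOME v. v \<in> braid_class n w)"
  using someI[of "\<lambda>v. v \<in> braid_class n w", OF braid_class_self] by (simp add: braid_class_def)

lemma braid_group_carrier: "carrier (braid_group n) = braid_class n ` bwords n"
  by (simp add: braid_group_def)

lemma braid_group_one: "\<one>\<^bsub>braid_group n\<^esub> = braid_class n []"
  by (simp add: braid_group_def)

lemma braid_group_mult:
  assumes "u \<in> bwords n" "v \<in> bwords n"
  shows "braid_class n u \<otimes>\<^bsub>braid_group n\<^esub> braid_class n v = braid_class n (u @ v)"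
proof -
  define u' where "u' = (SOME a. a \<in> braid_class n u)"
  define v' where "v' = (SOME b. b \<in> braid_class n v)"
  have "braid_eq n ([] @ u @ v) ([] @ u' @ v)"
    using braid_eq_context braid_eq_some_braid_class[OF assms(1)] unfolding u'_def by blast
  also have "braid_eq n ([] @ u' @ v) (u' @ v' @ [])"
    using braid_eq_context[of n v v' u' "[]"] braid_eq_some_braid_class[OF assms(2)]
      unfolding v'_def
    by simp
  finally show ?thesis
    unfolding braid_group_def u'_def v'_def by (simp add: braid_class_eqI braid_eq.sym)
qed

lemma braid_group_pow:
  "w \<in> bwords n \<Longrightarrow> braid_class n w [^]\<^bsub>braid_group n\<^esub> k = braid_class n (word_pow w k)"
proof (induction k)
  case (Suc k)
  then show ?case
    using word_pow_add[of w k 1] by (simp add: braid_group_mult word_pow_bwords)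
qed (simp add: braid_group_one)

lemma group_braid_group: "group (braid_group n)"
proof (rule groupI)
  fix x y z
  assume "x \<in> carrier (braid_group n)" "y \<in> carrier (braid_group n)" "z \<in> carrier (braid_group n)"
  then obtain u v w where "u \<in> bwords n" "v \<in> bwords n" "w \<in> bwords n"
    and "x = braid_class n u" "y = braid_class n v" "z = braid_class n w"
    by (auto simp: braid_group_carrier)
  then show "x \<otimes>\<^bsub>braid_group n\<^esub> y \<in> carrier (braid_group n)"
    and "x \<otimes>\<^bsub>braid_group n\<^esub> y \<otimes>\<^bsub>braid_group n\<^esub> z = x \<otimes>\<^bsub>braid_group n\<^esub> (y \<otimes>\<^bsub>braid_group n\<^esub> z)"
    and "\<one>\<^bsub>braid_group n\<^esub> \<otimes>\<^bsub>braid_group n\<^esub> x = x"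
    and "\<exists>x'\<in>carrier (braid_group n). x' \<otimes>\<^bsub>braid_group n\<^esub> x = \<one>\<^bsub>braid_group n\<^esub>"
    using braid_class_eqI[OF braid_eq_inv_bword_append, of u n]
    by (auto simp: braid_group_mult braid_group_carrier braid_group_one
        intro!: bexI[of _ "braid_class n (inv_bword u)"])
next
  show "\<one>\<^bsub>braid_group n\<^esub> \<in> carrier (braid_group n)"
    by (simp add: braid_group_carrier braid_group_one)
qed

lemma perm_of_bword_simps [simp]:
  "perm_of_bword [] = id"
  "perm_of_bword (a # w) = transpose (fst a) (Suc (fst a)) \<circ> perm_of_bword w"
  by (auto simp: perm_of_bword_def split: prod.splits)

lemma perm_of_bword_append: "perm_of_bword (u @ v) = perm_of_bword u \<circ> perm_of_bword v"
  by (induction u) (simp_all add: o_assoc)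

lemma perm_of_bword_braid_eq: "braid_eq n u v \<Longrightarrow> perm_of_bword u = perm_of_bword v"
proof (induction rule: braid_eq.induct)
  case (rel l r u v)
  then have "perm_of_bword l = perm_of_bword r"
    unfolding braid_rels_def by (auto simp: fun_eq_iff transpose_def)
  then show ?case by (simp add: perm_of_bword_append)
qed simp_all

lemma braid_perm_braid_class: "w \<in> bwords n \<Longrightarrow> braid_perm (braid_class n w) = perm_of_bword w"
  unfolding braid_perm_def by (metis braid_eq_some_braid_class perm_of_bword_braid_eq)

lemma perm_of_bword_permutes: "w \<in> bwords n \<Longrightarrow> perm_of_bword w permutes {1..n}"
  by (induction w) (auto intro!: permutes_compose permutes_swap_id)

lemma perm_of_bword_inv_bword:
  assumes "w \<in> bwords n"
  shows "perm_of_bword (inv_bword w) = inv' (perm_of_bword w)"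
proof (rule inv_unique_comp[symmetric])
  show "perm_of_bword w \<circ> perm_of_bword (inv_bword w) = id"
    using perm_of_bword_braid_eq[OF braid_eq_append_inv_bword[OF assms]]
      by (simp add: perm_of_bword_append)
  show "perm_of_bword (inv_bword w) \<circ> perm_of_bword w = id"
    using perm_of_bword_braid_eq[OF braid_eq_inv_bword_append[OF assms]]
      by (simp add: perm_of_bword_append)
qed

lemma group_hom_braid_perm: "group_hom (braid_group n) (sym_group n) braid_perm"
proof -
  have "braid_perm \<in> hom (braid_group n) (sym_group n)"
  proof (rule homI)
    fix x assume "x \<in> carrier (braid_group n)"
    then obtain w where "w \<in> bwords n" "x = braid_class n w" by (auto simp: braid_group_carrier)
    then show "braid_perm x \<in> carrier (sym_group n)"
      by (metis sym_group_carrier braid_perm_braid_class perm_of_bword_permutes)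
  next
    fix x y assume "x \<in> carrier (braid_group n)" "y \<in> carrier (braid_group n)"
    then obtain u v where "u \<in> bwords n" "v \<in> bwords n" "x = braid_class n u" "y = braid_class n v"
      by (auto simp: braid_group_carrier)
    then show "braid_perm (x \<otimes>\<^bsub>braid_group n\<^esub> y) = braid_perm x \<otimes>\<^bsub>sym_group n\<^esub> braid_perm y"
      by (simp add: braid_group_mult sym_group_mult braid_perm_braid_class perm_of_bword_append)
  qed
  then show ?thesis
    by (simp add: group_hom_def group_hom_axioms_def group_braid_group sym_group_is_group)
qed

lemma perm_of_bword_sigma_prod: "perm_of_bword (sigma_prod a k) = cycle_of_list [a..<a + k + 1]"
proof (induction k arbitrary: a)
  case (Suc k)
  have "[a..<a + Suc k + 1] = a # Suc a # [Suc (Suc a)..<Suc a + k + 1]"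
    by (simp add: upt_conv_Cons)
  moreover have "[Suc a..<Suc a + k + 1] = Suc a # [Suc (Suc a)..<Suc a + k + 1]"
    by (simp add: upt_conv_Cons)
  ultimately show ?case
    using Suc.IH[of "Suc a"] by (simp add: sigma_prod_Suc)
qed simp

lemma exists_bword_transpose:
  "1 \<le> a \<Longrightarrow> a < b \<Longrightarrow> b \<le> N \<Longrightarrow> \<exists>w \<in> bwords N. perm_of_bword w = transpose a b"
proof (induction b)
  case (Suc b)
  show ?case
  proof (cases "a = b")
    case True
    then show ?thesis using Suc.prems by (intro bexI[of _ "[(a, True)]"]) auto
  next
    case False
    then obtain w where w: "w \<in> bwords N" "perm_of_bword w = transpose a b" using Suc by auto
    \<comment> \<open>(b b+1) (a b) (b b+1) = (a b+1)\<close>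
    have "perm_of_bword ((b, True) # w @ [(b, True)]) = transpose a (Suc b)"
      using w(2) False Suc.prems by (auto simp: perm_of_bword_append fun_eq_iff transpose_def)
    moreover have "(b, True) # w @ [(b, True)] \<in> bwords N" using w(1) Suc.prems False by auto
    ultimately show ?thesis by blast
  qed
qed simp

lemma exists_bword_perm:
  assumes "p permutes {1..N}"
  shows "\<exists>w \<in> bwords N. perm_of_bword w = p"
  using assms finite_atLeastAtMost[of 1 N]
proof (induction p rule: permutes_induct)
  case (swap a b p)
  obtain w where w: "w \<in> bwords N" "perm_of_bword w = p" using swap.IH by auto
  obtain t where t: "t \<in> bwords N" "perm_of_bword t = transpose a b"
    using exists_bword_transpose[of a b N] exists_bword_transpose[of b a N] swap.hyps
    by (cases a b rule: linorder_cases) (auto simp: transpose_commute)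
  show ?case using w t by (intro bexI[of _ "t @ w"]) (auto simp: perm_of_bword_append)
qed (auto intro: bexI[of _ "[]"])

subsection \<open>Permutations and cycles\<close>

lemma exists_permutes_map:
  assumes "distinct xs" "distinct ys" "length xs = length ys" "set xs \<subseteq> A" "set ys \<subseteq> A"
  shows "\<exists>p. p permutes A \<and> map p xs = ys"
  using assms
proof (induction xs arbitrary: ys)
  case Nil then show ?case using permutes_id[of A] by (metis length_0_conv list.map(1))
next
  case (Cons x xs)
  then obtain y ys' where ys: "ys = y # ys'" by (cases ys) auto
  obtain p where p: "p permutes A" "map p xs = ys'" using Cons ys by auto
  have px: "p x \<in> A" using p(1) Cons.prems by (simp add: permutes_in_image)
  have "map (transpose (p x) y) ys' = ys'"
  proof (rule map_idI)
    fix v assume v: "v \<in> set ys'"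
    have "v \<noteq> y" using v Cons.prems ys by auto
    moreover have "v \<noteq> p x"
      using v p Cons.prems(1) permutes_inj[OF p(1)] by (auto dest: injD)
    ultimately show "transpose (p x) y v = v" by simp
  qed
  moreover have "transpose (p x) y \<circ> p permutes A"
    using permutes_compose[OF p(1) permutes_swap_id[OF px]] Cons.prems ys by auto
  moreover have "map (transpose (p x) y \<circ> p) (x # xs)
      = transpose (p x) y (p x) # map (transpose (p x) y) (map p xs)"
    by simp
  ultimately show ?case using p(2) ys by (metis transpose_apply_first)
qed

lemma cycle_of_list_append_pair:
  "cycle_of_list (L @ [a, b]) = cycle_of_list (L @ [a]) \<circ> transpose a b"
proof (induction L)
  case (Cons x L)
  then show ?case by (cases L) (auto simp: o_assoc)
qed simp

lemma cycle_of_list_rev: "cycle_of_list (rev L) = inv' (cycle_of_list L)"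
proof (induction L)
  case Nil then show ?case by simp
next
  case (Cons x L)
  show ?case
  proof (cases L)
    case Nil then show ?thesis by simp
  next
    case (Cons y zs)
    have bij_c: "bij (cycle_of_list (y # zs))"
      using permutation_of_cycle permutation_bijective by blast
    have "cycle_of_list (rev (x # L)) = cycle_of_list (rev zs @ [y]) \<circ> transpose y x"
      using Cons cycle_of_list_append_pair[of "rev zs" y x] by simp
    also have "\<dots> = inv' (cycle_of_list (y # zs)) \<circ> transpose x y"
      using Cons.IH Cons by (simp add: transpose_commute)
    also have "\<dots> = inv' (transpose x y \<circ> cycle_of_list (y # zs))"
      using o_inv_distrib[of "transpose x y" "cycle_of_list (y # zs)"] bij_c by simp
    finally show ?thesis using \<open>L = y # zs\<close> by (simp only: cycle_of_list.simps)
  qed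
qed

lemma cycle_of_list_rev_comp: "cycle_of_list (rev L) \<circ> cycle_of_list L = id"
proof -
  have "inj (cycle_of_list L)"
    using permutation_of_cycle permutation_bijective bij_is_inj by blast
  then show ?thesis by (simp add: cycle_of_list_rev inv_o_cancel)
qed

lemma cycle_of_list_rev_neq:
  assumes "distinct cs" "3 \<le> length cs"
  shows "cycle_of_list (rev cs) \<noteq> cycle_of_list cs"
proof
  let ?c = "cycle_of_list cs"
  assume "cycle_of_list (rev cs) = ?c"
  then have "inv' ?c = ?c" by (simp add: cycle_of_list_rev)
  moreover have "inj ?c"
    using permutation_of_cycle permutation_bijective bij_is_inj by blast
  ultimately have involution: "?c (?c (cs ! 0)) = cs ! 0" by (metis inv_f_f)
  have "(?c ^^ 2) (cs ! 0) = map (?c ^^ 2) cs ! 0"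
    by (rule nth_map[symmetric]) (use assms(2) in auto)
  also have "\<dots> = rotate 2 cs ! 0"
    by (simp only: cyclic_rotation[OF assms(1)])
  also have "\<dots> = cs ! 2"
    by (subst nth_rotate) (use assms(2) in auto)
  finally have "?c (?c (cs ! 0)) = cs ! 2" by (simp add: numeral_2_eq_2)
  then have "cs ! 2 = cs ! 0" using involution by simp
  moreover have "0 < length cs" "2 < length cs" using assms(2) by linarith+
  ultimately show False using nth_eq_iff_index_eq[OF assms(1), of 2 0] by simp
qed

subsection \<open>Unique roots in bi-orderable groups\<close>

lemma bi_orderable_pow_eq_imp_eq:
  fixes G (structure)
  assumes "bi_orderable G" "monoid G" "x \<in> carrier G" "y \<in> carrier G"
    and "x [^]\<^bsub>G\<^esub> Suc k = y [^]\<^bsub>G\<^esub> Suc k"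
  shows "x = y"
proof (rule ccontr)
  interpret monoid G by fact
  obtain less where irrefl: "\<forall>x \<in> carrier G. \<not> less x x"
    and trans: "\<forall>x \<in> carrier G. \<forall>y \<in> carrier G. \<forall>z \<in> carrier G. less x y \<longrightarrow> less y z \<longrightarrow> less x z"
    and total: "\<forall>x \<in> carrier G. \<forall>y \<in> carrier G. x \<noteq> y \<longrightarrow> less x y \<or> less y x"
    and mult: "\<forall>x \<in> carrier G. \<forall>y \<in> carrier G. \<forall>z \<in> carrier G. less x y \<longrightarrow>
        less (z \<otimes> x) (z \<otimes> y) \<and> less (x \<otimes> z) (y \<otimes> z)"
    using assms(1) unfolding bi_orderable_def by blast
  have pow_mono: "less (a [^] Suc m) (b [^] Suc m)"
    if "less a b" "a \<in> carrier G" "b \<in> carrier G" for a b m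
  proof (induction m)
    case (Suc m)
    have A: "a [^] Suc m \<in> carrier G" using that(2) by (rule nat_pow_closed)
    have B: "b [^] Suc m \<in> carrier G" using that(3) by (rule nat_pow_closed)
    have "less (a [^] Suc m \<otimes> a) (a [^] Suc m \<otimes> b)"
      using mult that A by blast
    moreover have "less (a [^] Suc m \<otimes> b) (b [^] Suc m \<otimes> b)"
      using mult Suc.IH A B that(3) by blast
    ultimately have "less (a [^] Suc m \<otimes> a) (b [^] Suc m \<otimes> b)"
      using trans A B that(2,3) m_closed by meson
    then show ?case by (simp only: nat_pow_Suc[where n = "Suc m"])
  qed (use that in simp)
  assume "x \<noteq> y"
  with total consider "less x y" | "less y x" using assms(3,4) by blast
  then show False
  proof cases
    case 1
    then have "less (y [^] Suc k) (y [^] Suc k)" using pow_mono assms(3-5) by metis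
    then show False using irrefl nat_pow_closed[OF assms(4)] by blast
  next
    case 2
    then have "less (y [^] Suc k) (y [^] Suc k)" using pow_mono assms(3-5) by metis
    then show False using irrefl nat_pow_closed[OF assms(4)] by blast
  qed
qed

subsection \<open>Two elements of \<^term>\<open>H_beta n \<beta>\<close> with a common power\<close>

lemma subgroup_H_beta: "\<beta> \<in> carrier (braid_group n) \<Longrightarrow> subgroup (H_beta n \<beta>) (braid_group n)"
  unfolding H_beta_def
  by (rule group.generate_is_subgroup[OF group_braid_group]) (auto simp: pure_braids_def)

lemma pure_braids_subset_H_beta: "pure_braids n \<subseteq> H_beta n \<beta>"
  unfolding H_beta_def by (auto intro: generate.incl)

lemma mem_H_beta_self: "\<beta> \<in> H_beta n \<beta>"
  unfolding H_beta_def by (auto intro: generate.incl)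

lemma H_beta_memI:
  assumes "\<beta> \<in> carrier (braid_group n)" "x \<in> carrier (braid_group n)"
    and "braid_perm x = braid_perm \<beta>"
  shows "x \<in> H_beta n \<beta>"
proof -
  interpret \<pi>: group_hom "braid_group n" "sym_group n" braid_perm by (rule group_hom_braid_perm)
  interpret H: subgroup "H_beta n \<beta>" "braid_group n" by (rule subgroup_H_beta[OF assms(1)])
  have "braid_perm \<beta> permutes {1..n}"
    using \<pi>.hom_closed[OF assms(1)] by (simp add: sym_group_carrier)
  then have "x \<otimes>\<^bsub>braid_group n\<^esub> inv\<^bsub>braid_group n\<^esub> \<beta> \<in> pure_braids n"
    using assms by (simp add: pure_braids_def sym_group_mult permutes_inv_o)
  then have "(x \<otimes>\<^bsub>braid_group n\<^esub> inv\<^bsub>braid_group n\<^esub> \<beta>) \<otimes>\<^bsub>braid_group n\<^esub> \<beta> \<in> H_beta n \<beta>"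
    using pure_braids_subset_H_beta mem_H_beta_self by blast
  then show ?thesis using assms by (simp add: \<pi>.G.m_assoc)
qed

lemma H_beta_memI_inverse:
  assumes "\<beta> \<in> carrier (braid_group n)" "x \<in> carrier (braid_group n)"
    and "braid_perm x \<circ> braid_perm \<beta> = id"
  shows "x \<in> H_beta n \<beta>"
proof -
  interpret \<pi>: group_hom "braid_group n" "sym_group n" braid_perm by (rule group_hom_braid_perm)
  interpret H: subgroup "H_beta n \<beta>" "braid_group n" by (rule subgroup_H_beta[OF assms(1)])
  have "x \<otimes>\<^bsub>braid_group n\<^esub> \<beta> \<in> pure_braids n"
    using assms by (simp add: pure_braids_def sym_group_mult)
  then have "(x \<otimes>\<^bsub>braid_group n\<^esub> \<beta>) \<otimes>\<^bsub>braid_group n\<^esub> inv\<^bsub>braid_group n\<^esub> \<beta> \<in> H_beta n \<beta>"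
    using pure_braids_subset_H_beta mem_H_beta_self by blast
  then show ?thesis using assms by (simp add: \<pi>.G.m_assoc)
qed

lemma cycle_and_reverse_common_power:
  assumes "distinct cs" "length cs = Suc M" "set cs \<subseteq> {1..n}"
  obtains x y where "x \<in> carrier (braid_group n)" "y \<in> carrier (braid_group n)"
    and "braid_perm x = cycle_of_list cs" "braid_perm y = cycle_of_list (rev cs)"
    and "x [^]\<^bsub>braid_group n\<^esub> Suc M = y [^]\<^bsub>braid_group n\<^esub> Suc M"
proof -
  have "Suc M \<le> n"
    using card_mono[OF _ assms(3)] distinct_card[OF assms(1)] assms(2) by simp
  define L where "L = [1..<M + 2]"
  have L: "distinct L" "length L = Suc M" "set L \<subseteq> {1..n}" "set L \<subseteq> {1..Suc M}"
    using \<open>Suc M \<le> n\<close> by (auto simp: L_def)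
  obtain W where W: "W permutes {1..n}" "map W L = cs"
    using exists_permutes_map[of L cs "{1..n}"] L assms by auto
  obtain w where w: "w \<in> bwords n" "perm_of_bword w = W"
    using exists_bword_perm[OF W(1)] by auto
  obtain R where R: "R permutes {1..Suc M}" "map R L = rev L"
    using exists_permutes_map[of L "rev L" "{1..Suc M}"] L by auto
  obtain \<rho> where \<rho>: "\<rho> \<in> bwords (Suc M)" "perm_of_bword \<rho> = R"
    using exists_bword_perm[OF R(1)] by auto
  have "\<rho> \<in> bwords n" using bwords_mono[OF \<rho>(1) \<open>Suc M \<le> n\<close>] .
  let ?\<delta> = "sigma_prod 1 M"
  have \<delta>: "?\<delta> \<in> bwords n" using \<open>Suc M \<le> n\<close> by (simp add: sigma_prod_bwords)
  have conj_perm: "braid_perm (braid_class n (u @ ?\<delta> @ inv_bword u))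
      = cycle_of_list (map (perm_of_bword u) L)" if "u \<in> bwords n" for u
  proof -
    have "bij (perm_of_bword u)" using perm_of_bword_permutes[OF that] permutes_bij by blast
    moreover have "perm_of_bword ?\<delta> = cycle_of_list L"
      by (simp add: perm_of_bword_sigma_prod L_def)
    ultimately show ?thesis
      using that \<delta> L(1) by (simp add: braid_perm_braid_class perm_of_bword_append
          perm_of_bword_inv_bword conjugation_of_cycle o_assoc)
  qed
  show thesis
  proof (rule that)
    show "braid_class n (w @ ?\<delta> @ inv_bword w) \<in> carrier (braid_group n)"
      and "braid_class n ((w @ \<rho>) @ ?\<delta> @ inv_bword (w @ \<rho>)) \<in> carrier (braid_group n)"
      using w(1) \<open>\<rho> \<in> bwords n\<close> \<delta> by (auto simp: braid_group_carrier)
    show "braid_perm (braid_class n (w @ ?\<delta> @ inv_bword w)) = cycle_of_list cs"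
      using conj_perm[OF w(1)] w(2) W(2) by simp
    show "braid_perm (braid_class n ((w @ \<rho>) @ ?\<delta> @ inv_bword (w @ \<rho>))) = cycle_of_list (rev cs)"
    proof -
      have "map (W \<circ> R) L = rev cs" using R(2) W(2) by (metis map_map rev_map)
      then show ?thesis
        using conj_perm[of "w @ \<rho>"] w \<rho>(2) \<open>\<rho> \<in> bwords n\<close> by (simp add: perm_of_bword_append)
    qed
    have x: "w @ ?\<delta> @ inv_bword w \<in> bwords n"
      and y: "(w @ \<rho>) @ ?\<delta> @ inv_bword (w @ \<rho>) \<in> bwords n"
      using w(1) \<open>\<rho> \<in> bwords n\<close> \<delta> by simp_all
    show "braid_class n (w @ ?\<delta> @ inv_bword w) [^]\<^bsub>braid_group n\<^esub> Suc M
        = braid_class n ((w @ \<rho>) @ ?\<delta> @ inv_bword (w @ \<rho>)) [^]\<^bsub>braid_group n\<^esub> Suc M"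
      unfolding braid_group_pow[OF x] braid_group_pow[OF y]
      by (rule braid_class_eqI[OF braid_eq.sym[OF braid_eq_pow_conj_sigma_prod]])
        (use w(1) \<rho>(1) \<open>Suc M \<le> n\<close> in auto)
  qed
qed

theorem mainTheorem12:
  fixes n i :: nat and \<beta> :: "bword set"
  assumes "n \<ge> 3" and "2 \<le> i" and "i \<le> n - 1"
    and "\<beta> \<in> carrier (braid_group n)"
    and "\<exists>cs. distinct cs \<and> length cs = i + 1 \<and> set cs \<subseteq> {1..n}
               \<and> braid_perm \<beta> = cycle_of_list cs"
  shows "\<not> bi_orderable ((braid_group n)\<lparr>carrier := H_beta n \<beta>\<rparr>)"
proof
  let ?H = "(braid_group n)\<lparr>carrier := H_beta n \<beta>\<rparr>"
  assume bi_ord: "bi_orderable ?H"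
  obtain cs where cs: "distinct cs" "length cs = Suc i" "set cs \<subseteq> {1..n}"
    and \<beta>_perm: "braid_perm \<beta> = cycle_of_list cs"
    using assms(5) by auto
  obtain x y where xy: "x \<in> carrier (braid_group n)" "y \<in> carrier (braid_group n)"
    and x_perm: "braid_perm x = cycle_of_list cs"
    and y_perm: "braid_perm y = cycle_of_list (rev cs)"
    and pow_eq: "x [^]\<^bsub>braid_group n\<^esub> Suc i = y [^]\<^bsub>braid_group n\<^esub> Suc i"
    using cycle_and_reverse_common_power[OF cs] .
  have "x \<in> H_beta n \<beta>"
    using H_beta_memI[OF assms(4) xy(1)] x_perm \<beta>_perm by simp
  moreover have "y \<in> H_beta n \<beta>"
    by (rule H_beta_memI_inverse[OF assms(4) xy(2)])
      (simp add: y_perm \<beta>_perm cycle_of_list_rev_comp)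
  moreover have "group ?H"
    using group.subgroup_imp_group[OF group_braid_group subgroup_H_beta[OF assms(4)]] .
  moreover have "x [^]\<^bsub>?H\<^esub> Suc i = y [^]\<^bsub>?H\<^esub> Suc i"
    using pow_eq monoid.nat_pow_consistent[OF group.is_monoid[OF group_braid_group]] by metis
  ultimately have "x = y"
    using bi_orderable_pow_eq_imp_eq[OF bi_ord group.is_monoid] by simp
  then show False
    using x_perm y_perm cycle_of_list_rev_neq[OF cs(1)] cs(2) assms(2) by simp
qed

end
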